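(* Let $L$ be the generator (domain $D(L)$) of a conservative Markov process with stationary distribution $\nu$, and $\mathcal{E}(f,g)=-\int Lf\cdot g\,d\nu$. Let $f,g\in D(L)$ satisfy $\mathcal{E}(f,f)\mathcal{E}(g,g)>0$ and $\check{\mathcal{E}}(f,g):=(\mathcal{E}(f,g)-\mathcal{E}(g,f))/2>0$. Put $\tilde{\mathcal{E}}(f,g)=(\mathcal{E}(f,g)+\mathcal{E}(g,f))/2$ and $\Delta(f,g)=\mathcal{E}(f,f)\mathcal{E}(g,g)-\tilde{\mathcal{E}}(f,g)^2$. Then $\Delta(f,g)\ge0$ and $$\mathrm{Sect}(\mathcal{E})^2-1\ge\begin{cases}\check{\mathcal{E}}(f,g)^2/\Delta(f,g)&\text{if }\mathcal{E}(f,f)\mathcal{E}(g,g)\ne\mathcal{E}(f,g)\tilde{\mathcal{E}}(f,g)\text{ and }\Delta(f,g)>0,\\ \infty&\text{if }\mathcal{E}(f,f)\mathcal{E}(g,g)\ne\mathcal{E}(f,g)\tilde{\mathcal{E}}(f,g)\text{ and }\Delta(f,g)=0,\\ \check{\mathcal{E}}(f,g)/\tilde{\mathcal{E}}(f,g)&\text{if }\mathcal{E}(f,f)\mathcal{E}(g,g)=\mathcal{E}(f,g)\tilde{\mathcal{E}}(f,g).\end{cases}$$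
   Context: $\mathrm{Sect}(\mathcal{E})$ is the infimum of all finite $C$ such that $\mathcal{E}(f,g)\le C\mathcal{E}(f,f)^{1/2}\mathcal{E}(g,g)^{1/2}$ for all $f,g\in D(L)$, and $=\infty$ if no such $C$ exists. *)

theory Defs
  imports "HOL-Probability.Probability"
begin

text \<open>A conservative time-homogeneous Markov process on the measurable state space
  underlying \<open>\<nu>\<close> is given by its transition kernels \<open>K t\<close>, \<open>t \<ge> 0\<close>
  (probability kernels, i.e. conservative), satisfying the Chapman--Kolmogorov
  (semigroup) equations.\<close>

definition markov_semigroup :: "'a measure \<Rightarrow> (real \<Rightarrow> 'a \<Rightarrow> 'a measure) \<Rightarrow> bool" where
  "markov_semigroup M K \<longleftrightarrow>
     (\<forall>t\<ge>0. K t \<in> M \<rightarrow>\<^sub>M prob_algebra M) \<and>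
     (\<forall>x\<in>space M. K 0 x = return M x) \<and>
     (\<forall>s\<ge>0. \<forall>t\<ge>0. \<forall>x\<in>space M. K (s + t) x = bind (K s x) (K t))"

definition stationary_distribution :: "'a measure \<Rightarrow> (real \<Rightarrow> 'a \<Rightarrow> 'a measure) \<Rightarrow> bool" where
  "stationary_distribution \<nu> K \<longleftrightarrow> prob_space \<nu> \<and> (\<forall>t\<ge>0. bind \<nu> (K t) = \<nu>)"

definition sq_int :: "'a measure \<Rightarrow> ('a \<Rightarrow> real) \<Rightarrow> bool" where
  "sq_int \<nu> f \<longleftrightarrow> f \<in> borel_measurable \<nu> \<and> integrable \<nu> (\<lambda>x. (f x)\<^sup>2)"

definition trans_op :: "(real \<Rightarrow> 'a \<Rightarrow> 'a measure) \<Rightarrow> real \<Rightarrow> ('a \<Rightarrow> real) \<Rightarrow> 'a \<Rightarrow> real" where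
  "trans_op K t f x = (\<integral>y. f y \<partial>(K t x))"

definition has_generator_value ::
  "'a measure \<Rightarrow> (real \<Rightarrow> 'a \<Rightarrow> 'a measure) \<Rightarrow> ('a \<Rightarrow> real) \<Rightarrow> ('a \<Rightarrow> real) \<Rightarrow> bool" where
  "has_generator_value \<nu> K f g \<longleftrightarrow> sq_int \<nu> f \<and> sq_int \<nu> g \<and>
     ((\<lambda>t. \<integral>x. ((trans_op K t f x - f x) / t - g x)\<^sup>2 \<partial>\<nu>) \<longlongrightarrow> 0) (at_right 0)"

definition gen_domain :: "'a measure \<Rightarrow> (real \<Rightarrow> 'a \<Rightarrow> 'a measure) \<Rightarrow> ('a \<Rightarrow> real) set" where
  "gen_domain \<nu> K = {f. \<exists>g. has_generator_value \<nu> K f g}"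

definition generator :: "'a measure \<Rightarrow> (real \<Rightarrow> 'a \<Rightarrow> 'a measure) \<Rightarrow> ('a \<Rightarrow> real) \<Rightarrow> 'a \<Rightarrow> real" where
  "generator \<nu> K f = (SOME g. has_generator_value \<nu> K f g)"

definition dform :: "'a measure \<Rightarrow> (real \<Rightarrow> 'a \<Rightarrow> 'a measure) \<Rightarrow> ('a \<Rightarrow> real) \<Rightarrow> ('a \<Rightarrow> real) \<Rightarrow> real" where
  "dform \<nu> K f g = - (\<integral>x. generator \<nu> K f x * g x \<partial>\<nu>)"

text \<open>Sector constant: infimum of all finite \<open>C\<close> with
  \<open>\<E>(f,g) \<le> C \<E>(f,f)^{1/2} \<E>(g,g)^{1/2}\<close> on \<open>D(L)\<close>; \<open>\<infinity>\<close> if there is none.\<close>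

definition sect :: "'a measure \<Rightarrow> (real \<Rightarrow> 'a \<Rightarrow> 'a measure) \<Rightarrow> ereal" where
  "sect \<nu> K = Inf {ereal C | C. \<forall>f\<in>gen_domain \<nu> K. \<forall>g\<in>gen_domain \<nu> K.
       dform \<nu> K f g \<le> C * sqrt (dform \<nu> K f f) * sqrt (dform \<nu> K g g)}"

end

theory Submission
  imports Defs
begin

text \<open>
  Writing \<open>P\<^sub>t\<close> for the transition operators, Jensen's inequality for each kernel and the
  stationarity of \<open>\<nu>\<close> make every \<open>P\<^sub>t\<close> a contraction of \<open>L\<^sup>2(\<nu>)\<close>. Hence the generator is
  dissipative, \<open>\<integral> Lh \<cdot> h d\<nu> = lim \<integral> (P\<^sub>t h - h)/t \<cdot> h d\<nu> \<le> 0\<close>, and the bilinear form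
  \<open>E(h,k) = -\<integral> Lh \<cdot> k d\<nu>\<close> is nonnegative on the diagonal; the discriminant of
  \<open>\<lambda> \<mapsto> E(f + \<lambda>g, f + \<lambda>g)\<close> gives \<open>\<Delta> \<ge> 0\<close>.

  For the lower bound, let \<open>C\<close> be any admissible sector constant and test it on \<open>f\<close> and
  \<open>h = (\<Delta> - Etl \<cdot> Ech) f + E(f,f) Ech g\<close>. Then \<open>E(f,h) = E(f,f) (\<Delta> + Ech\<^sup>2)\<close> and
  \<open>E(h,h) = E(f,f) \<Delta> (\<Delta> + Ech\<^sup>2)\<close>, so the sector inequality becomes
  \<open>\<surd>(\<Delta> + Ech\<^sup>2) \<le> C \<surd>\<Delta>\<close>. This rules out \<open>\<Delta> = 0\<close> (then no \<open>C\<close> exists and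
  \<open>Sect = \<infinity>\<close>) and otherwise gives \<open>C\<^sup>2 \<ge> 1 + Ech\<^sup>2/\<Delta>\<close>. In the case
  \<open>E(f,f) E(g,g) = E(f,g) Etl\<close> one has \<open>\<Delta> = Etl \<cdot> Ech\<close>, so \<open>Ech\<^sup>2/\<Delta> = Ech/Etl\<close>.
\<close>

section \<open>Square-integrable functions\<close>

lemma sq_int_mult_integrable:
  assumes "sq_int M f" "sq_int M g"
  shows "integrable M (\<lambda>x. f x * g x)"
proof (rule Bochner_Integration.integrable_bound)
  show "integrable M (\<lambda>x. (f x)\<^sup>2 + (g x)\<^sup>2)" using assms by (simp add: sq_int_def)
  show "(\<lambda>x. f x * g x) \<in> borel_measurable M" using assms by (auto simp: sq_int_def)
  show "AE x in M. norm (f x * g x) \<le> norm ((f x)\<^sup>2 + (g x)\<^sup>2)"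
  proof (intro AE_I2)
    fix x
    have "2 * \<bar>f x\<bar> * \<bar>g x\<bar> \<le> (f x)\<^sup>2 + (g x)\<^sup>2"
      using sum_squares_bound[of "\<bar>f x\<bar>" "\<bar>g x\<bar>"] by simp
    moreover have "0 \<le> \<bar>f x\<bar> * \<bar>g x\<bar>" by simp
    ultimately have "\<bar>f x\<bar> * \<bar>g x\<bar> \<le> (f x)\<^sup>2 + (g x)\<^sup>2" by linarith
    then show "norm (f x * g x) \<le> norm ((f x)\<^sup>2 + (g x)\<^sup>2)" by (simp add: abs_mult)
  qed
qed

lemma sq_int_lincomb:
  assumes "sq_int M f" "sq_int M g"
  shows "sq_int M (\<lambda>x. a * f x + b * g x)"
proof -
  have "(\<lambda>x. (a * f x + b * g x)\<^sup>2) = (\<lambda>x. a\<^sup>2 * (f x)\<^sup>2 + (2 * a * b) * (f x * g x) + b\<^sup>2 * (g x)\<^sup>2)"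
    by (auto simp: power2_eq_square algebra_simps)
  then show ?thesis
    using assms sq_int_mult_integrable[OF assms] by (auto simp: sq_int_def)
qed

lemma power2_add_le: "(x + y)\<^sup>2 \<le> 2 * x\<^sup>2 + 2 * (y::real)\<^sup>2"
  unfolding power2_sum using sum_squares_bound[of x y] by linarith

lemma quadratic_nonneg_imp_discriminant_le:
  fixes A B C :: real
  assumes nonneg: "\<And>l. 0 \<le> A - 2 * l * B + l\<^sup>2 * C" and "0 \<le> C"
  shows "B\<^sup>2 \<le> A * C"
proof (cases "C = 0")
  case True
  have "B = 0"
  proof (rule ccontr)
    assume "B \<noteq> 0"
    with nonneg[of "(A + 1) / (2 * B)"] True show False by (simp add: field_simps)
  qed
  then show ?thesis using nonneg[of 0] True by simp
next
  case False
  with \<open>0 \<le> C\<close> have "C > 0" by simp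
  with nonneg[of "B / C"] show ?thesis by (simp add: field_simps power2_eq_square)
qed

lemma Cauchy_Schwarz_integral:
  assumes "sq_int M f" "sq_int M g"
  shows "(\<integral>x. f x * g x \<partial>M)\<^sup>2 \<le> (\<integral>x. (f x)\<^sup>2 \<partial>M) * (\<integral>x. (g x)\<^sup>2 \<partial>M)"
proof (rule quadratic_nonneg_imp_discriminant_le)
  fix l :: real
  have "(\<lambda>x. (f x - l * g x)\<^sup>2) = (\<lambda>x. (f x)\<^sup>2 - (2 * l) * (f x * g x) + l\<^sup>2 * (g x)\<^sup>2)"
    by (auto simp: power2_eq_square algebra_simps)
  then have "(\<integral>x. (f x - l * g x)\<^sup>2 \<partial>M)
      = (\<integral>x. (f x)\<^sup>2 \<partial>M) - 2 * l * (\<integral>x. f x * g x \<partial>M) + l\<^sup>2 * (\<integral>x. (g x)\<^sup>2 \<partial>M)"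
    using assms sq_int_mult_integrable[OF assms] by (simp add: sq_int_def)
  moreover have "0 \<le> (\<integral>x. (f x - l * g x)\<^sup>2 \<partial>M)" by simp
  ultimately show "0 \<le> (\<integral>x. (f x)\<^sup>2 \<partial>M) - 2 * l * (\<integral>x. f x * g x \<partial>M) + l\<^sup>2 * (\<integral>x. (g x)\<^sup>2 \<partial>M)"
    by simp
qed simp

lemma tendsto_integral_mult_zero:
  fixes u :: "'b \<Rightarrow> 'a \<Rightarrow> real"
  assumes lim: "((\<lambda>t. \<integral>x. (u t x)\<^sup>2 \<partial>M) \<longlongrightarrow> 0) F"
    and u: "\<forall>\<^sub>F t in F. sq_int M (u t)" and f: "sq_int M f"
  shows "((\<lambda>t. \<integral>x. u t x * f x \<partial>M) \<longlongrightarrow> 0) F"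
proof -
  have bound_lim: "((\<lambda>t. (\<integral>x. (u t x)\<^sup>2 \<partial>M) * (\<integral>x. (f x)\<^sup>2 \<partial>M)) \<longlongrightarrow> 0) F"
    using tendsto_mult_left_zero[OF lim] .
  have bound: "\<forall>\<^sub>F t in F. (\<integral>x. u t x * f x \<partial>M)\<^sup>2 \<le> (\<integral>x. (u t x)\<^sup>2 \<partial>M) * (\<integral>x. (f x)\<^sup>2 \<partial>M)"
    using u by eventually_elim (rule Cauchy_Schwarz_integral[OF _ f])
  have "((\<lambda>t. (\<integral>x. u t x * f x \<partial>M)\<^sup>2) \<longlongrightarrow> 0) F"
    by (rule tendsto_sandwich[OF _ bound tendsto_const bound_lim]) simp
  then have "((\<lambda>t. sqrt ((\<integral>x. u t x * f x \<partial>M)\<^sup>2)) \<longlongrightarrow> sqrt 0) F"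
    by (rule tendsto_real_sqrt)
  then show ?thesis by (simp add: tendsto_rabs_zero_iff)
qed

lemma tendsto_integral_square_zero_dominated:
  fixes u v w :: "'b \<Rightarrow> 'a \<Rightarrow> real"
  assumes lim_u: "((\<lambda>t. \<integral>x. (u t x)\<^sup>2 \<partial>M) \<longlongrightarrow> 0) F"
    and lim_w: "((\<lambda>t. \<integral>x. (w t x)\<^sup>2 \<partial>M) \<longlongrightarrow> 0) F"
    and sq_u: "\<forall>\<^sub>F t in F. sq_int M (u t)" and sq_w: "\<forall>\<^sub>F t in F. sq_int M (w t)"
    and dom: "\<forall>\<^sub>F t in F. AE x in M. (v t x)\<^sup>2 \<le> c * (u t x)\<^sup>2 + d * (w t x)\<^sup>2"
    and "0 \<le> c" "0 \<le> d"
  shows "((\<lambda>t. \<integral>x. (v t x)\<^sup>2 \<partial>M) \<longlongrightarrow> 0) F"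
proof -
  have bound_lim: "((\<lambda>t. c * (\<integral>x. (u t x)\<^sup>2 \<partial>M) + d * (\<integral>x. (w t x)\<^sup>2 \<partial>M)) \<longlongrightarrow> 0) F"
    using tendsto_add[OF tendsto_mult_right_zero[OF lim_u] tendsto_mult_right_zero[OF lim_w]] by simp
  have bound: "\<forall>\<^sub>F t in F. (\<integral>x. (v t x)\<^sup>2 \<partial>M) \<le> c * (\<integral>x. (u t x)\<^sup>2 \<partial>M) + d * (\<integral>x. (w t x)\<^sup>2 \<partial>M)"
    using sq_u sq_w dom
  proof eventually_elim
    case (elim t)
    then have int: "integrable M (\<lambda>x. (u t x)\<^sup>2)" "integrable M (\<lambda>x. (w t x)\<^sup>2)"
      by (simp_all add: sq_int_def)
    have "(\<integral>x. (v t x)\<^sup>2 \<partial>M) \<le> (\<integral>x. c * (u t x)\<^sup>2 + d * (w t x)\<^sup>2 \<partial>M)"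
    proof (rule integral_mono_AE')
      show "integrable M (\<lambda>x. c * (u t x)\<^sup>2 + d * (w t x)\<^sup>2)" using int by simp
      show "AE x in M. 0 \<le> c * (u t x)\<^sup>2 + d * (w t x)\<^sup>2"
        using \<open>0 \<le> c\<close> \<open>0 \<le> d\<close> by simp
    qed (use elim in simp)
    also have "\<dots> = c * (\<integral>x. (u t x)\<^sup>2 \<partial>M) + d * (\<integral>x. (w t x)\<^sup>2 \<partial>M)"
      using int by simp
    finally show ?case .
  qed
  show ?thesis
    by (rule tendsto_sandwich[OF _ bound tendsto_const bound_lim]) simp
qed

lemma (in prob_space) square_integral_le_nn_integral_square:
  fixes f :: "'a \<Rightarrow> real"
  assumes "f \<in> borel_measurable M"
  shows "ennreal ((\<integral>x. f x \<partial>M)\<^sup>2) \<le> (\<integral>\<^sup>+x. (f x)\<^sup>2 \<partial>M)"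
proof (cases "integrable M (\<lambda>x. (f x)\<^sup>2)")
  case True
  then have "integrable M f" using assms by (rule square_integrable_imp_integrable[rotated])
  with True have "(\<integral>x. f x \<partial>M)\<^sup>2 \<le> (\<integral>x. (f x)\<^sup>2 \<partial>M)"
    using variance_eq[of f] variance_positive[of f] by simp
  moreover have "(\<integral>\<^sup>+x. (f x)\<^sup>2 \<partial>M) = ennreal (\<integral>x. (f x)\<^sup>2 \<partial>M)"
    using True by (intro nn_integral_eq_integral) auto
  ultimately show ?thesis by simp
next
  case False
  then have "(\<integral>\<^sup>+x. (f x)\<^sup>2 \<partial>M) = \<infinity>"
    using assms by (auto simp: integrable_iff_bounded less_top[symmetric])
  then show ?thesis by simp
qed

definition difference_quotient :: "(real \<Rightarrow> 'a \<Rightarrow> 'a measure) \<Rightarrow> real \<Rightarrow> ('a \<Rightarrow> real) \<Rightarrow> 'a \<Rightarrow> real"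
  where "difference_quotient K t f x = (trans_op K t f x - f x) / t"

lemma has_generator_value_iff:
  "has_generator_value \<nu> K f g \<longleftrightarrow> sq_int \<nu> f \<and> sq_int \<nu> g \<and>
     ((\<lambda>t. \<integral>x. (difference_quotient K t f x - g x)\<^sup>2 \<partial>\<nu>) \<longlongrightarrow> 0) (at_right 0)"
  by (simp add: has_generator_value_def difference_quotient_def)

lemma has_generator_value_generator:
  assumes "f \<in> gen_domain \<nu> K"
  shows "has_generator_value \<nu> K f (generator \<nu> K f)"
proof -
  from assms obtain g where "has_generator_value \<nu> K f g" by (auto simp: gen_domain_def)
  then show ?thesis unfolding generator_def by (rule someI[of "has_generator_value \<nu> K f"])
qed

lemma sq_int_gen_domain: "f \<in> gen_domain \<nu> K \<Longrightarrow> sq_int \<nu> f"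
  using has_generator_value_generator[of f \<nu> K] by (simp add: has_generator_value_def)

lemma sq_int_generator: "f \<in> gen_domain \<nu> K \<Longrightarrow> sq_int \<nu> (generator \<nu> K f)"
  using has_generator_value_generator[of f \<nu> K] by (simp add: has_generator_value_def)

lemma dform_lincomb_right:
  assumes "f \<in> gen_domain \<nu> K" "sq_int \<nu> g" "sq_int \<nu> h"
  shows "dform \<nu> K f (\<lambda>x. a * g x + b * h x) = a * dform \<nu> K f g + b * dform \<nu> K f h"
proof -
  have "integrable \<nu> (\<lambda>x. generator \<nu> K f x * g x)" "integrable \<nu> (\<lambda>x. generator \<nu> K f x * h x)"
    using assms by (auto intro: sq_int_mult_integrable sq_int_generator)
  then show ?thesis by (simp add: dform_def algebra_simps)
qed

section \<open>Transition operators of a stationary Markov semigroup\<close>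

context
  fixes \<nu> :: "'a measure" and K :: "real \<Rightarrow> 'a \<Rightarrow> 'a measure"
  assumes markov: "markov_semigroup \<nu> K"
begin

lemma kernel_measurable_subprob:
  "t \<ge> 0 \<Longrightarrow> K t \<in> \<nu> \<rightarrow>\<^sub>M subprob_algebra \<nu>"
  using markov unfolding markov_semigroup_def by (auto intro: measurable_prob_algebraD)

lemma prob_space_kernel:
  assumes "t \<ge> 0" "x \<in> space \<nu>"
  shows "prob_space (K t x)" and "sets (K t x) = sets \<nu>"
proof -
  have "K t \<in> \<nu> \<rightarrow>\<^sub>M prob_algebra \<nu>" using markov assms(1) unfolding markov_semigroup_def by auto
  then have "K t x \<in> space (prob_algebra \<nu>)" using assms(2) by (rule measurable_space)
  then show "prob_space (K t x)" "sets (K t x) = sets \<nu>" by (auto simp: space_prob_algebra)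
qed

lemma borel_measurable_kernel:
  "t \<ge> 0 \<Longrightarrow> x \<in> space \<nu> \<Longrightarrow> f \<in> borel_measurable \<nu> \<Longrightarrow> f \<in> borel_measurable (K t x)"
  using measurable_cong_sets[OF prob_space_kernel(2) refl] by blast

lemma borel_measurable_trans_op:
  assumes "t \<ge> 0" "f \<in> borel_measurable \<nu>"
  shows "trans_op K t f \<in> borel_measurable \<nu>"
  using measurable_comp[OF kernel_measurable_subprob[OF assms(1)]
      integral_measurable_subprob_algebra[OF assms(2)]]
  by (simp add: trans_op_def[abs_def] comp_def)

context
  assumes stationary: "stationary_distribution \<nu> K"
begin

lemma nn_integral_kernel_stationary:
  assumes "t \<ge> 0" "h \<in> borel_measurable \<nu>"
  shows "(\<integral>\<^sup>+x. (\<integral>\<^sup>+y. h y \<partial>K t x) \<partial>\<nu>) = (\<integral>\<^sup>+y. h y \<partial>\<nu>)"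
proof -
  have "(\<integral>\<^sup>+x. (\<integral>\<^sup>+y. h y \<partial>K t x) \<partial>\<nu>) = (\<integral>\<^sup>+y. h y \<partial>(\<nu> \<bind> K t))"
    using nn_integral_bind[OF assms(2) kernel_measurable_subprob[OF assms(1)]] by simp
  also have "\<nu> \<bind> K t = \<nu>" using stationary assms(1) unfolding stationary_distribution_def by auto
  finally show ?thesis .
qed

lemma nn_integral_trans_op_square_le:
  assumes "t \<ge> 0" "f \<in> borel_measurable \<nu>"
  shows "(\<integral>\<^sup>+x. (trans_op K t f x)\<^sup>2 \<partial>\<nu>) \<le> (\<integral>\<^sup>+x. (f x)\<^sup>2 \<partial>\<nu>)"
proof -
  have "(\<integral>\<^sup>+x. (trans_op K t f x)\<^sup>2 \<partial>\<nu>) \<le> (\<integral>\<^sup>+x. (\<integral>\<^sup>+y. (f y)\<^sup>2 \<partial>K t x) \<partial>\<nu>)"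
  proof (rule nn_integral_mono)
    fix x assume "x \<in> space \<nu>"
    then interpret prob_space "K t x" using prob_space_kernel assms(1) by blast
    show "ennreal ((trans_op K t f x)\<^sup>2) \<le> (\<integral>\<^sup>+y. (f y)\<^sup>2 \<partial>K t x)"
      unfolding trans_op_def
      by (rule square_integral_le_nn_integral_square)
        (rule borel_measurable_kernel[OF assms(1) \<open>x \<in> space \<nu>\<close> assms(2)])
  qed
  also have "\<dots> = (\<integral>\<^sup>+x. (f x)\<^sup>2 \<partial>\<nu>)"
    using assms(2) by (intro nn_integral_kernel_stationary[OF assms(1)]) measurable
  finally show ?thesis .
qed

lemma sq_int_trans_op:
  assumes "t \<ge> 0" "sq_int \<nu> f"
  shows "sq_int \<nu> (trans_op K t f)"
    and "(\<integral>x. (trans_op K t f x)\<^sup>2 \<partial>\<nu>) \<le> (\<integral>x. (f x)\<^sup>2 \<partial>\<nu>)"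
proof -
  have f: "f \<in> borel_measurable \<nu>" "integrable \<nu> (\<lambda>x. (f x)\<^sup>2)"
    using assms(2) by (auto simp: sq_int_def)
  have Pf: "trans_op K t f \<in> borel_measurable \<nu>"
    using borel_measurable_trans_op assms(1) f(1) .
  have "(\<integral>\<^sup>+x. (trans_op K t f x)\<^sup>2 \<partial>\<nu>) \<le> ennreal (\<integral>x. (f x)\<^sup>2 \<partial>\<nu>)"
    using nn_integral_trans_op_square_le[OF assms(1) f(1)] f(2)
    by (simp add: nn_integral_eq_integral)
  moreover from this have Pf_int: "integrable \<nu> (\<lambda>x. (trans_op K t f x)\<^sup>2)"
    using Pf by (auto simp: integrable_iff_bounded intro: le_less_trans)
  ultimately show "(\<integral>x. (trans_op K t f x)\<^sup>2 \<partial>\<nu>) \<le> (\<integral>x. (f x)\<^sup>2 \<partial>\<nu>)"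
    by (simp add: nn_integral_eq_integral)
  show "sq_int \<nu> (trans_op K t f)" using Pf Pf_int by (simp add: sq_int_def)
qed

lemma AE_integrable_kernel:
  assumes "t \<ge> 0" "sq_int \<nu> f"
  shows "AE x in \<nu>. integrable (K t x) f"
proof -
  have f: "f \<in> borel_measurable \<nu>" "integrable \<nu> (\<lambda>x. (f x)\<^sup>2)"
    using assms(2) by (auto simp: sq_int_def)
  have "(\<lambda>x. \<integral>\<^sup>+y. (f y)\<^sup>2 \<partial>K t x) \<in> borel_measurable \<nu>"
    using measurable_comp[OF kernel_measurable_subprob[OF assms(1)]
        nn_integral_measurable_subprob_algebra[of "\<lambda>y. ennreal ((f y)\<^sup>2)"]] f(1)
    by (simp add: comp_def)
  moreover have "(\<integral>\<^sup>+x. (\<integral>\<^sup>+y. (f y)\<^sup>2 \<partial>K t x) \<partial>\<nu>) \<noteq> \<infinity>"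
    using nn_integral_kernel_stationary[OF assms(1)] f by (simp add: nn_integral_eq_integral)
  ultimately have "AE x in \<nu>. (\<integral>\<^sup>+y. (f y)\<^sup>2 \<partial>K t x) \<noteq> \<infinity>"
    by (rule nn_integral_PInf_AE)
  then show ?thesis
  proof (rule AE_mp[OF _ AE_I2], intro impI)
    fix x assume "x \<in> space \<nu>" and fin: "(\<integral>\<^sup>+y. (f y)\<^sup>2 \<partial>K t x) \<noteq> \<infinity>"
    interpret prob_space "K t x" using prob_space_kernel assms(1) \<open>x \<in> space \<nu>\<close> by blast
    have "f \<in> borel_measurable (K t x)"
      using borel_measurable_kernel assms(1) \<open>x \<in> space \<nu>\<close> f(1) by blast
    moreover from this fin have "integrable (K t x) (\<lambda>y. (f y)\<^sup>2)"
      by (auto simp: integrable_iff_bounded less_top)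
    ultimately show "integrable (K t x) f" by (rule square_integrable_imp_integrable)
  qed
qed

lemma AE_trans_op_lincomb:
  assumes "t \<ge> 0" "sq_int \<nu> f" "sq_int \<nu> g"
  shows "AE x in \<nu>. trans_op K t (\<lambda>y. a * f y + b * g y) x = a * trans_op K t f x + b * trans_op K t g x"
  using AE_integrable_kernel[OF assms(1,2)] AE_integrable_kernel[OF assms(1,3)]
proof eventually_elim
  case (elim x)
  then show ?case unfolding trans_op_def by simp
qed

section \<open>Uniqueness, linearity and dissipativity of the generator\<close>

lemma sq_int_difference_quotient:
  assumes "t \<ge> 0" "sq_int \<nu> f"
  shows "sq_int \<nu> (difference_quotient K t f)"
proof -
  have "difference_quotient K t f = (\<lambda>x. (1 / t) * trans_op K t f x + (- 1 / t) * f x)"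
    by (simp add: fun_eq_iff difference_quotient_def diff_divide_distrib)
  then show ?thesis by (simp only:) (rule sq_int_lincomb[OF sq_int_trans_op(1)[OF assms] assms(2)])
qed

lemma integral_difference_quotient_mult_nonpos:
  assumes "t > 0" "sq_int \<nu> f"
  shows "(\<integral>x. difference_quotient K t f x * f x \<partial>\<nu>) \<le> 0"
proof -
  have "sq_int \<nu> (trans_op K t f)" and contraction: "(\<integral>x. (trans_op K t f x)\<^sup>2 \<partial>\<nu>) \<le> (\<integral>x. (f x)\<^sup>2 \<partial>\<nu>)"
    using sq_int_trans_op assms by auto
  then have int: "integrable \<nu> (\<lambda>x. (trans_op K t f x)\<^sup>2)" "integrable \<nu> (\<lambda>x. (f x)\<^sup>2)"
    using assms(2) by (auto simp: sq_int_def)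
  have pointwise: "difference_quotient K t f x * f x \<le> ((trans_op K t f x)\<^sup>2 - (f x)\<^sup>2) / (2 * t)" for x
  proof -
    have "((trans_op K t f x)\<^sup>2 - (f x)\<^sup>2) / (2 * t) - difference_quotient K t f x * f x
        = (trans_op K t f x - f x)\<^sup>2 / (2 * t)"
      using assms(1) by (simp add: difference_quotient_def field_simps power2_eq_square)
    moreover have "0 \<le> (trans_op K t f x - f x)\<^sup>2 / (2 * t)" using assms(1) by simp
    ultimately show ?thesis by linarith
  qed
  have "(\<integral>x. difference_quotient K t f x * f x \<partial>\<nu>) \<le> (\<integral>x. ((trans_op K t f x)\<^sup>2 - (f x)\<^sup>2) / (2 * t) \<partial>\<nu>)"
    using sq_int_mult_integrable[OF sq_int_difference_quotient assms(2)] assms int pointwise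
    by (intro integral_mono) auto
  also have "\<dots> = ((\<integral>x. (trans_op K t f x)\<^sup>2 \<partial>\<nu>) - (\<integral>x. (f x)\<^sup>2 \<partial>\<nu>)) / (2 * t)"
    using int by simp
  also have "\<dots> \<le> 0" using contraction assms(1) by (simp add: divide_nonpos_pos)
  finally show ?thesis .
qed

lemma eventually_sq_int_generator_residual:
  assumes "has_generator_value \<nu> K f g"
  shows "\<forall>\<^sub>F t in at_right 0. sq_int \<nu> (\<lambda>x. difference_quotient K t f x - g x)"
proof (rule eventually_at_rightI[of 0 1])
  fix t :: real assume "t \<in> {0<..<1}"
  moreover have "sq_int \<nu> f" "sq_int \<nu> g" using assms by (auto simp: has_generator_value_def)
  ultimately show "sq_int \<nu> (\<lambda>x. difference_quotient K t f x - g x)"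
    using sq_int_lincomb[OF sq_int_difference_quotient[of t f], where a = 1 and b = "- 1"] by simp
qed simp

lemma AE_difference_quotient_lincomb:
  assumes "t \<ge> 0" "sq_int \<nu> f" "sq_int \<nu> g"
  shows "AE x in \<nu>. difference_quotient K t (\<lambda>y. a * f y + b * g y) x
    = a * difference_quotient K t f x + b * difference_quotient K t g x"
  using AE_trans_op_lincomb[OF assms, where a = a and b = b]
proof eventually_elim
  case (elim x)
  then show ?case
    unfolding difference_quotient_def by (cases "t = 0") (simp_all add: field_simps)
qed

lemma has_generator_value_unique:
  assumes g1: "has_generator_value \<nu> K f g1" and g2: "has_generator_value \<nu> K f g2"
  shows "AE x in \<nu>. g1 x = g2 x"
proof -
  have lim: "((\<lambda>t. \<integral>x. (difference_quotient K t f x - g2 x)\<^sup>2 \<partial>\<nu>) \<longlongrightarrow> 0) (at_right 0)"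
    "((\<lambda>t. \<integral>x. (difference_quotient K t f x - g1 x)\<^sup>2 \<partial>\<nu>) \<longlongrightarrow> 0) (at_right 0)"
    using g1 g2 by (auto simp: has_generator_value_iff)
  have pointwise: "AE x in \<nu>. (g1 x - g2 x)\<^sup>2
      \<le> 2 * (difference_quotient K t f x - g2 x)\<^sup>2 + 2 * (difference_quotient K t f x - g1 x)\<^sup>2" for t
  proof (rule AE_I2)
    fix x
    show "(g1 x - g2 x)\<^sup>2 \<le> 2 * (difference_quotient K t f x - g2 x)\<^sup>2 + 2 * (difference_quotient K t f x - g1 x)\<^sup>2"
      using power2_add_le[of "difference_quotient K t f x - g2 x" "g1 x - difference_quotient K t f x"]
      by (simp add: power2_commute)
  qed
  have "((\<lambda>t. \<integral>x. (g1 x - g2 x)\<^sup>2 \<partial>\<nu>) \<longlongrightarrow> 0) (at_right (0::real))"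
    by (rule tendsto_integral_square_zero_dominated[OF lim eventually_sq_int_generator_residual[OF g2]
          eventually_sq_int_generator_residual[OF g1] always_eventually[OF allI[OF pointwise]]]) simp_all
  then have "(\<integral>x. (g1 x - g2 x)\<^sup>2 \<partial>\<nu>) = 0"
    by (simp add: tendsto_const_iff)
  moreover have "integrable \<nu> (\<lambda>x. (g1 x - g2 x)\<^sup>2)"
    using g1 g2 sq_int_lincomb[of \<nu> g1 g2 1 "- 1"] by (simp add: has_generator_value_def sq_int_def)
  ultimately have "AE x in \<nu>. (g1 x - g2 x)\<^sup>2 = 0"
    by (simp add: integral_nonneg_eq_0_iff_AE)
  then show ?thesis by simp
qed

lemma has_generator_value_lincomb:
  assumes f: "has_generator_value \<nu> K f Lf" and g: "has_generator_value \<nu> K g Lg"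
  shows "has_generator_value \<nu> K (\<lambda>x. a * f x + b * g x) (\<lambda>x. a * Lf x + b * Lg x)"
proof -
  have sq: "sq_int \<nu> f" "sq_int \<nu> Lf" "sq_int \<nu> g" "sq_int \<nu> Lg"
    using f g by (auto simp: has_generator_value_def)
  have bound: "\<forall>\<^sub>F t in at_right 0. AE x in \<nu>.
      (difference_quotient K t (\<lambda>y. a * f y + b * g y) x - (a * Lf x + b * Lg x))\<^sup>2
        \<le> 2 * a\<^sup>2 * (difference_quotient K t f x - Lf x)\<^sup>2 + 2 * b\<^sup>2 * (difference_quotient K t g x - Lg x)\<^sup>2"
  proof (rule eventually_at_rightI[of 0 1])
    fix t :: real assume "t \<in> {0<..<1}"
    then have "0 \<le> t" by simp
    show "AE x in \<nu>. (difference_quotient K t (\<lambda>y. a * f y + b * g y) x - (a * Lf x + b * Lg x))\<^sup>2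
        \<le> 2 * a\<^sup>2 * (difference_quotient K t f x - Lf x)\<^sup>2 + 2 * b\<^sup>2 * (difference_quotient K t g x - Lg x)\<^sup>2"
      using AE_difference_quotient_lincomb[OF \<open>0 \<le> t\<close> sq(1,3), where a = a and b = b]
    proof eventually_elim
      case (elim x)
      then have "difference_quotient K t (\<lambda>y. a * f y + b * g y) x - (a * Lf x + b * Lg x)
          = a * (difference_quotient K t f x - Lf x) + b * (difference_quotient K t g x - Lg x)"
        by (simp add: algebra_simps)
      then show ?case
        using power2_add_le[of "a * (difference_quotient K t f x - Lf x)" "b * (difference_quotient K t g x - Lg x)"]
        by (simp add: power_mult_distrib)
    qed
  qed simp
  have lim: "((\<lambda>t. \<integral>x. (difference_quotient K t f x - Lf x)\<^sup>2 \<partial>\<nu>) \<longlongrightarrow> 0) (at_right 0)"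
    "((\<lambda>t. \<integral>x. (difference_quotient K t g x - Lg x)\<^sup>2 \<partial>\<nu>) \<longlongrightarrow> 0) (at_right 0)"
    using f g by (auto simp: has_generator_value_iff)
  have "((\<lambda>t. \<integral>x. (difference_quotient K t (\<lambda>y. a * f y + b * g y) x - (a * Lf x + b * Lg x))\<^sup>2 \<partial>\<nu>)
      \<longlongrightarrow> 0) (at_right 0)"
    by (rule tendsto_integral_square_zero_dominated[OF lim eventually_sq_int_generator_residual[OF f]
          eventually_sq_int_generator_residual[OF g] bound]) simp_all
  then show ?thesis
    using sq_int_lincomb[OF sq(1,3)] sq_int_lincomb[OF sq(2,4)] by (simp add: has_generator_value_iff)
qed

lemma has_generator_value_dissipative:
  assumes "has_generator_value \<nu> K f g"
  shows "(\<integral>x. g x * f x \<partial>\<nu>) \<le> 0"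
proof -
  have sq: "sq_int \<nu> f" "sq_int \<nu> g" and
    lim: "((\<lambda>t. \<integral>x. (difference_quotient K t f x - g x)\<^sup>2 \<partial>\<nu>) \<longlongrightarrow> 0) (at_right 0)"
    using assms by (auto simp: has_generator_value_iff)
  have "((\<lambda>t. (\<integral>x. g x * f x \<partial>\<nu>) + (\<integral>x. (difference_quotient K t f x - g x) * f x \<partial>\<nu>))
      \<longlongrightarrow> (\<integral>x. g x * f x \<partial>\<nu>) + 0) (at_right 0)"
    by (intro tendsto_add tendsto_const tendsto_integral_mult_zero[OF lim _ sq(1)]
        eventually_sq_int_generator_residual[OF assms])
  moreover have "\<forall>\<^sub>F t in at_right 0.
      (\<integral>x. g x * f x \<partial>\<nu>) + (\<integral>x. (difference_quotient K t f x - g x) * f x \<partial>\<nu>) \<le> 0"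
  proof (rule eventually_at_rightI[of 0 1])
    fix t :: real assume "t \<in> {0<..<1}"
    then have t: "t > 0" by simp
    have "integrable \<nu> (\<lambda>x. g x * f x)" "integrable \<nu> (\<lambda>x. difference_quotient K t f x * f x)"
      using sq_int_mult_integrable sq_int_difference_quotient[of t f] sq t by auto
    then have "(\<integral>x. g x * f x \<partial>\<nu>) + (\<integral>x. (difference_quotient K t f x - g x) * f x \<partial>\<nu>)
        = (\<integral>x. difference_quotient K t f x * f x \<partial>\<nu>)"
      by (simp add: left_diff_distrib)
    also have "\<dots> \<le> 0" using integral_difference_quotient_mult_nonpos t sq(1) .
    finally show "(\<integral>x. g x * f x \<partial>\<nu>) + (\<integral>x. (difference_quotient K t f x - g x) * f x \<partial>\<nu>) \<le> 0" .
  qed simp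
  ultimately show ?thesis by (simp add: tendsto_upperbound)
qed

lemma gen_domain_lincomb:
  "f \<in> gen_domain \<nu> K \<Longrightarrow> g \<in> gen_domain \<nu> K \<Longrightarrow> (\<lambda>x. a * f x + b * g x) \<in> gen_domain \<nu> K"
  using has_generator_value_lincomb has_generator_value_generator unfolding gen_domain_def by blast

lemma dform_nonneg: "f \<in> gen_domain \<nu> K \<Longrightarrow> 0 \<le> dform \<nu> K f f"
  using has_generator_value_dissipative[OF has_generator_value_generator] by (simp add: dform_def)

lemma dform_lincomb_left:
  assumes f: "f \<in> gen_domain \<nu> K" and g: "g \<in> gen_domain \<nu> K" and h: "sq_int \<nu> h"
  shows "dform \<nu> K (\<lambda>x. a * f x + b * g x) h = a * dform \<nu> K f h + b * dform \<nu> K g h"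
proof -
  let ?L = "generator \<nu> K"
  have "AE x in \<nu>. ?L (\<lambda>y. a * f y + b * g y) x = a * ?L f x + b * ?L g x"
    by (rule has_generator_value_unique[OF has_generator_value_generator[OF gen_domain_lincomb[OF f g]]
          has_generator_value_lincomb[OF has_generator_value_generator[OF f] has_generator_value_generator[OF g]]])
  then have "(\<integral>x. ?L (\<lambda>y. a * f y + b * g y) x * h x \<partial>\<nu>) = (\<integral>x. (a * ?L f x + b * ?L g x) * h x \<partial>\<nu>)"
    using sq_int_generator[OF gen_domain_lincomb[OF f g, of a b]] sq_int_generator[OF f] sq_int_generator[OF g] h
    by (intro integral_cong_AE) (auto simp: sq_int_def)
  moreover have "integrable \<nu> (\<lambda>x. ?L f x * h x)" "integrable \<nu> (\<lambda>x. ?L g x * h x)"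
    using sq_int_mult_integrable sq_int_generator f g h by blast+
  ultimately show ?thesis by (simp add: dform_def algebra_simps)
qed

lemma dform_lincomb_lincomb:
  assumes f: "f \<in> gen_domain \<nu> K" and g: "g \<in> gen_domain \<nu> K"
  shows "dform \<nu> K (\<lambda>x. u * f x + v * g x) (\<lambda>x. u * f x + v * g x)
    = u\<^sup>2 * dform \<nu> K f f + u * v * (dform \<nu> K f g + dform \<nu> K g f) + v\<^sup>2 * dform \<nu> K g g"
  using sq_int_gen_domain[OF f] sq_int_gen_domain[OF g]
  by (simp add: dform_lincomb_left[OF f g] dform_lincomb_right[OF f] dform_lincomb_right[OF g]
      sq_int_lincomb power2_eq_square algebra_simps)

lemma dform_symmetric_part_square_le:
  assumes f: "f \<in> gen_domain \<nu> K" and g: "g \<in> gen_domain \<nu> K"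
  shows "((dform \<nu> K f g + dform \<nu> K g f) / 2)\<^sup>2 \<le> dform \<nu> K f f * dform \<nu> K g g"
proof (rule quadratic_nonneg_imp_discriminant_le)
  fix l :: real
  have "0 \<le> dform \<nu> K (\<lambda>x. 1 * f x + (- l) * g x) (\<lambda>x. 1 * f x + (- l) * g x)"
    by (rule dform_nonneg[OF gen_domain_lincomb[OF f g]])
  then show "0 \<le> dform \<nu> K f f - 2 * l * ((dform \<nu> K f g + dform \<nu> K g f) / 2) + l\<^sup>2 * dform \<nu> K g g"
    unfolding dform_lincomb_lincomb[OF f g] by (simp add: algebra_simps)
qed (rule dform_nonneg[OF g])

end

end

section \<open>The sector constant\<close>

definition sector_bound :: "'a measure \<Rightarrow> (real \<Rightarrow> 'a \<Rightarrow> 'a measure) \<Rightarrow> real \<Rightarrow> bool" where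
  "sector_bound \<nu> K C \<longleftrightarrow> (\<forall>f\<in>gen_domain \<nu> K. \<forall>g\<in>gen_domain \<nu> K.
     dform \<nu> K f g \<le> C * sqrt (dform \<nu> K f f) * sqrt (dform \<nu> K g g))"

lemma sect_eq_Inf_sector_bound: "sect \<nu> K = Inf (ereal ` Collect (sector_bound \<nu> K))"
  unfolding sect_def sector_bound_def by (rule arg_cong[of _ _ Inf]) blast

lemma ereal_le_sect: "(\<And>C. sector_bound \<nu> K C \<Longrightarrow> m \<le> C) \<Longrightarrow> ereal m \<le> sect \<nu> K"
  unfolding sect_eq_Inf_sector_bound by (auto intro: Inf_greatest)

lemma sect_eq_infinity:
  assumes "\<And>C. \<not> sector_bound \<nu> K C"
  shows "sect \<nu> K = \<infinity>"
proof -
  have no_bound: "ereal ` Collect (sector_bound \<nu> K) = {}" using assms by blast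
  show ?thesis unfolding sect_eq_Inf_sector_bound no_bound by (simp add: top_ereal_def)
qed

lemma ereal_power2_minus_one_mono:
  fixes x :: ereal
  assumes "0 \<le> m" "ereal m \<le> x"
  shows "ereal (m\<^sup>2 - 1) \<le> x\<^sup>2 - 1"
proof (cases x)
  case (real r)
  with assms have "m\<^sup>2 \<le> r\<^sup>2" by (intro power_mono) auto
  with real show ?thesis by (simp add: power2_eq_square one_ereal_def)
qed (use assms in \<open>auto simp: power2_eq_square\<close>)

lemma sect_power2_minus_one_ge:
  assumes "0 \<le> x" "\<And>C. sector_bound \<nu> K C \<Longrightarrow> sqrt (1 + x) \<le> C"
  shows "ereal x \<le> (sect \<nu> K)\<^sup>2 - 1"
  using ereal_power2_minus_one_mono[OF _ ereal_le_sect[OF assms(2)]] assms(1) by simp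

lemma sector_inequality_lower_bound:
  fixes a b s c C :: real
  assumes "0 < a" "0 < c" "s\<^sup>2 \<le> a * b"
    and sector: "\<And>u v. u * a + v * (s + c) \<le> C * sqrt a * sqrt (u\<^sup>2 * a + 2 * u * v * s + v\<^sup>2 * b)"
  shows "s\<^sup>2 < a * b" and "sqrt (1 + c\<^sup>2 / (a * b - s\<^sup>2)) \<le> C"
proof -
  define D where "D = a * b - s\<^sup>2"
  define R where "R = sqrt (D + c\<^sup>2)"
  have "0 \<le> D" using assms(3) by (simp add: D_def)
  have R_pos: "0 < R" and R_sq: "R\<^sup>2 = D + c\<^sup>2"
    using \<open>0 \<le> D\<close> \<open>0 < c\<close> by (simp_all add: R_def add_nonneg_pos)
  \<comment> \<open>test with \<open>u = D - s c\<close>, \<open>v = a c\<close>: both sides become multiples of \<open>D + c\<^sup>2\<close>\<close>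
  have "(D - s * c) * a + a * c * (s + c) = a * (D + c\<^sup>2)"
    "(D - s * c)\<^sup>2 * a + 2 * (D - s * c) * (a * c) * s + (a * c)\<^sup>2 * b = a * D * (D + c\<^sup>2)"
    unfolding D_def by (simp_all add: power2_eq_square algebra_simps)
  then have "a * (D + c\<^sup>2) \<le> C * sqrt a * sqrt (a * D * (D + c\<^sup>2))"
    using sector[of "D - s * c" "a * c"] by simp
  also have "\<dots> = a * (C * sqrt D * R)"
  proof -
    have "sqrt a * sqrt a = a" using \<open>0 < a\<close> by simp
    then show ?thesis using \<open>0 < a\<close> \<open>0 \<le> D\<close> by (simp add: R_def real_sqrt_mult)
  qed
  finally have "D + c\<^sup>2 \<le> C * sqrt D * R" using \<open>0 < a\<close> by simp
  then have "R * R \<le> R * (C * sqrt D)" using R_sq by (simp add: power2_eq_square algebra_simps)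
  then have R_le: "R \<le> C * sqrt D" using R_pos by simp
  then have "0 < D" using R_pos \<open>0 \<le> D\<close> by (cases "D = 0") auto
  then show "s\<^sup>2 < a * b" by (simp add: D_def)
  have "sqrt (1 + c\<^sup>2 / D) = R / sqrt D"
    using \<open>0 < D\<close> by (simp add: R_def real_sqrt_divide[symmetric] field_simps)
  also have "\<dots> \<le> C" using R_le \<open>0 < D\<close> by (simp add: divide_le_eq)
  finally show "sqrt (1 + c\<^sup>2 / (a * b - s\<^sup>2)) \<le> C" by (simp add: D_def)
qed

lemma discriminant_eq_of_product_eq:
  fixes a b s c :: real
  assumes "a * b = (s + c) * s" "0 < a * b" "0 < c" "s\<^sup>2 \<le> a * b"
  shows "0 < a * b - s\<^sup>2" and "c\<^sup>2 / (a * b - s\<^sup>2) = c / s"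
proof -
  have eq: "a * b - s\<^sup>2 = s * c" using assms(1) by (simp add: power2_eq_square algebra_simps)
  have "s \<noteq> 0" using assms(1,2) by auto
  moreover have "0 \<le> s * c" using eq assms(4) by simp
  then have "0 \<le> s" using assms(3) by (simp add: zero_le_mult_iff)
  ultimately have "0 < s" by simp
  with eq assms(3) show "0 < a * b - s\<^sup>2" and "c\<^sup>2 / (a * b - s\<^sup>2) = c / s"
    by (simp_all add: power2_eq_square)
qed

lemma sector_bound_lower_bound:
  assumes markov: "markov_semigroup \<nu> K" and stationary: "stationary_distribution \<nu> K"
    and f: "f \<in> gen_domain \<nu> K" and g: "g \<in> gen_domain \<nu> K" and C: "sector_bound \<nu> K C"
    and "0 < dform \<nu> K f f" and "dform \<nu> K g f < dform \<nu> K f g"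
  defines "s \<equiv> (dform \<nu> K f g + dform \<nu> K g f) / 2" and "c \<equiv> (dform \<nu> K f g - dform \<nu> K g f) / 2"
  shows "s\<^sup>2 < dform \<nu> K f f * dform \<nu> K g g"
    and "sqrt (1 + c\<^sup>2 / (dform \<nu> K f f * dform \<nu> K g g - s\<^sup>2)) \<le> C"
proof -
  have "u * dform \<nu> K f f + v * (s + c)
      \<le> C * sqrt (dform \<nu> K f f) * sqrt (u\<^sup>2 * dform \<nu> K f f + 2 * u * v * s + v\<^sup>2 * dform \<nu> K g g)" for u v
  proof -
    have "dform \<nu> K f (\<lambda>x. u * f x + v * g x)
        \<le> C * sqrt (dform \<nu> K f f) * sqrt (dform \<nu> K (\<lambda>x. u * f x + v * g x) (\<lambda>x. u * f x + v * g x))"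
      using C f gen_domain_lincomb[OF markov stationary f g] unfolding sector_bound_def by blast
    moreover have "s + c = dform \<nu> K f g" by (simp add: s_def c_def field_simps)
    ultimately show ?thesis
      using sq_int_gen_domain[OF f] sq_int_gen_domain[OF g]
      by (simp add: dform_lincomb_right[OF f] dform_lincomb_lincomb[OF markov stationary f g] s_def mult.assoc)
  qed
  moreover have "s\<^sup>2 \<le> dform \<nu> K f f * dform \<nu> K g g"
    unfolding s_def by (rule dform_symmetric_part_square_le[OF markov stationary f g])
  moreover have "0 < c" using assms(7) by (simp add: c_def)
  ultimately show "s\<^sup>2 < dform \<nu> K f f * dform \<nu> K g g"
    and "sqrt (1 + c\<^sup>2 / (dform \<nu> K f f * dform \<nu> K g g - s\<^sup>2)) \<le> C"
    using sector_inequality_lower_bound[OF assms(6)] by blast+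
qed

theorem proposition3p7:
  fixes \<nu> :: "'a measure" and K :: "real \<Rightarrow> 'a \<Rightarrow> 'a measure" and f g :: "'a \<Rightarrow> real"
  assumes "markov_semigroup \<nu> K"
    and "stationary_distribution \<nu> K"
    and "f \<in> gen_domain \<nu> K" and "g \<in> gen_domain \<nu> K"
    and "dform \<nu> K f f * dform \<nu> K g g > 0"
    and "(dform \<nu> K f g - dform \<nu> K g f) / 2 > 0"
  shows "let Ech = (dform \<nu> K f g - dform \<nu> K g f) / 2;
             Etl = (dform \<nu> K f g + dform \<nu> K g f) / 2;
             \<Delta> = dform \<nu> K f f * dform \<nu> K g g - Etl\<^sup>2
         in \<Delta> \<ge> 0 \<and>
            (dform \<nu> K f f * dform \<nu> K g g \<noteq> dform \<nu> K f g * Etl \<and> \<Delta> > 0 \<longrightarrow>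
               (sect \<nu> K)\<^sup>2 - 1 \<ge> ereal (Ech\<^sup>2 / \<Delta>)) \<and>
            (dform \<nu> K f f * dform \<nu> K g g \<noteq> dform \<nu> K f g * Etl \<and> \<Delta> = 0 \<longrightarrow>
               (sect \<nu> K)\<^sup>2 - 1 \<ge> \<infinity>) \<and>
            (dform \<nu> K f f * dform \<nu> K g g = dform \<nu> K f g * Etl \<longrightarrow>
               (sect \<nu> K)\<^sup>2 - 1 \<ge> ereal (Ech / Etl))"
proof -
  note f = assms(3) and g = assms(4)
  define s where "s = (dform \<nu> K f g + dform \<nu> K g f) / 2"
  define c where "c = (dform \<nu> K f g - dform \<nu> K g f) / 2"
  define \<Delta> where "\<Delta> = dform \<nu> K f f * dform \<nu> K g g - s\<^sup>2"
  have "0 < dform \<nu> K f f"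
    using assms(5) dform_nonneg[OF assms(1,2) f] dform_nonneg[OF assms(1,2) g]
    by (auto simp: zero_less_mult_iff)
  moreover have "dform \<nu> K g f < dform \<nu> K f g" using assms(6) by simp
  ultimately have bound: "\<And>C. sector_bound \<nu> K C \<Longrightarrow> 0 < \<Delta> \<and> sqrt (1 + c\<^sup>2 / \<Delta>) \<le> C"
    using sector_bound_lower_bound[OF assms(1,2) f g] by (simp add: \<Delta>_def s_def c_def)
  have \<Delta>_nonneg: "0 \<le> \<Delta>"
    using dform_symmetric_part_square_le[OF assms(1,2) f g] by (simp add: \<Delta>_def s_def)
  have positive_case: "ereal (c\<^sup>2 / \<Delta>) \<le> (sect \<nu> K)\<^sup>2 - 1" if "0 < \<Delta>"
    using that bound by (intro sect_power2_minus_one_ge) auto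
  have degenerate_case: "sect \<nu> K = \<infinity>" if "\<Delta> = 0"
    using bound that by (blast intro: sect_eq_infinity)
  have "dform \<nu> K f g = s + c" by (simp add: s_def c_def field_simps)
  then have equality_case: "0 < \<Delta> \<and> c\<^sup>2 / \<Delta> = c / s"
    if "dform \<nu> K f f * dform \<nu> K g g = dform \<nu> K f g * s"
    using discriminant_eq_of_product_eq[of "dform \<nu> K f f" "dform \<nu> K g g" s c] that assms(5,6)
      \<Delta>_nonneg by (simp add: \<Delta>_def c_def)
  show ?thesis
    unfolding Let_def s_def[symmetric] c_def[symmetric] \<Delta>_def[symmetric]
    using \<Delta>_nonneg positive_case degenerate_case equality_case
    by (auto simp: power2_eq_square)
qed

end
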